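(* For the hypergeometric weights described in the context, the step-line recursion coefficients satisfy \begin{align*} \alpha&=(\vartheta H)H^{-1}=\mathfrak a_{+}S^{[1]}-S^{[1]},\\ \beta&=-\vartheta S^{[1]}=\mathfrak a_{+}S^{[2]}-S^{[2]}-S^{[1]}\mathfrak a_{-}\big((\vartheta H)H^{-1}\big),\\ \gamma&=-\vartheta S^{[2]}+(\vartheta\mathfrak a_{-}S^{[1]})S^{[1]}=H^{-1}\mathfrak a^2_{-}H. \end{align*}
   Context: Weights on $\mathbb N_0$: $w^{(a)}(k)=\frac{(b^{(a)}_1)_k\cdots(b^{(a)}_{M^{(a)}})_k}{(c_1)_k\cdots(c_N)_k}\frac{(\eta^{(a)})^k}{k!}$, $a\in\{1,2\}$, convergent series. Moment matrix (indices from 0): $\mathscr M_{n,2m}=\sum_k k^{n+m}w^{(1)}(k)$, $\mathscr M_{n,2m+1}=\sum_k k^{n+m}w^{(2)}(k)$, with all leading principal minors nonzero, so $\mathscr M=S^{-1}H\tilde S^{-\top}$ ($S,\tilde S$ lower unitriangular, $H$ diagonal), depending on $(\eta^{(1)},\eta^{(2)})$. $\Lambda$ has ones on the first superdiagonal; $S=I+\Lambda^\top S^{[1]}+(\Lambda^\top)^2S^{[2]}+\cdots$ with diagonal $S^{[k]}$; $S\Lambda S^{-1}=(\Lambda^\top)^2\gamma+\Lambda^\top\beta+\alpha+\Lambda$ with diagonal $\alpha,\beta,\gamma$. $\mathfrak a_-\operatorname{diag}(m_0,m_1,\dots)=\operatorname{diag}(m_1,m_2,\dots)$, $\mathfrak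 a_+\operatorname{diag}(m_0,m_1,\dots)=\operatorname{diag}(0,m_0,m_1,\dots)$. $\vartheta=\eta^{(1)}\partial/\partial\eta^{(1)}+\eta^{(2)}\partial/\partial\eta^{(2)}$. *)

theory Defs
  imports Complex_Main "HOL-Analysis.Derivative" "Jordan_Normal_Form.Determinant"
begin

text \<open>Infinite matrices indexed by nat are functions nat => nat => real;
  diagonal matrices are represented by their diagonal nat => real.
  Parameters are pairs eta = (eta1, eta2).\<close>

definition hgw :: "real list \<Rightarrow> real list \<Rightarrow> real \<Rightarrow> nat \<Rightarrow> real" where
  "hgw bs cs eta k =
     prod_list (map (\<lambda>b. pochhammer b k) bs) / prod_list (map (\<lambda>c. pochhammer c k) cs)
     * eta ^ k / fact k"

definition moment :: "real list \<Rightarrow> real list \<Rightarrow> real list \<Rightarrow> real \<times> real \<Rightarrow> nat \<Rightarrow> nat \<Rightarrow> real" where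
  "moment b1 b2 cs eta n j =
     (if even j then (\<Sum>k. real k ^ (n + j div 2) * hgw b1 cs (fst eta) k)
      else (\<Sum>k. real k ^ (n + j div 2) * hgw b2 cs (snd eta) k))"

definition leading_minor :: "(nat \<Rightarrow> nat \<Rightarrow> real) \<Rightarrow> nat \<Rightarrow> real" where
  "leading_minor A n = det (mat n n (\<lambda>(i, j). A i j))"

text \<open>Inverse of a lower unitriangular infinite matrix (finite recursion).\<close>
function ltinv :: "(nat \<Rightarrow> nat \<Rightarrow> real) \<Rightarrow> nat \<Rightarrow> nat \<Rightarrow> real" where
  "ltinv S n m = (if n < m then 0 else if n = m then 1
     else - (\<Sum>k\<in>{m..<n}. S n k * ltinv S k m))"
  by pat_completeness auto
termination by (relation "measure (\<lambda>(S, n, m). n)") auto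

text \<open>J = S Lambda S^{-1}; (S Lambda)_{n,j} = S_{n,j-1} for j >= 1 and 0 for j = 0.\<close>
definition jacobi :: "(nat \<Rightarrow> nat \<Rightarrow> real) \<Rightarrow> nat \<Rightarrow> nat \<Rightarrow> real" where
  "jacobi S n m = (\<Sum>j\<in>{1..n+1}. S n (j - 1) * ltinv S j m)"

definition alpha_coef :: "(nat \<Rightarrow> nat \<Rightarrow> real) \<Rightarrow> nat \<Rightarrow> real" where
  "alpha_coef S n = jacobi S n n"
definition beta_coef :: "(nat \<Rightarrow> nat \<Rightarrow> real) \<Rightarrow> nat \<Rightarrow> real" where
  "beta_coef S n = jacobi S (n + 1) n"
definition gamma_coef :: "(nat \<Rightarrow> nat \<Rightarrow> real) \<Rightarrow> nat \<Rightarrow> real" where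
  "gamma_coef S n = jacobi S (n + 2) n"

definition subdiag :: "nat \<Rightarrow> (nat \<Rightarrow> nat \<Rightarrow> real) \<Rightarrow> nat \<Rightarrow> real" where
  "subdiag k S n = S (n + k) n"

definition aminus :: "(nat \<Rightarrow> real) \<Rightarrow> nat \<Rightarrow> real" where
  "aminus d n = d (n + 1)"
definition aplus :: "(nat \<Rightarrow> real) \<Rightarrow> nat \<Rightarrow> real" where
  "aplus d n = (if n = 0 then 0 else d (n - 1))"

definition theta :: "(real \<times> real \<Rightarrow> real) \<Rightarrow> real \<times> real \<Rightarrow> real" where
  "theta f e = fst e * deriv (\<lambda>t. f (t, snd e)) (fst e) + snd e * deriv (\<lambda>t. f (fst e, t)) (snd e)"

end

theory Submission
  imports Defs
begin

text \<open>
  Everything rests on one triangular solve: if \<open>S M\<close> agrees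
  on and below the diagonal with \<open>diag H\<close>, \<open>H\<close> invertible, and a finitely supported
  row \<open>v\<close> satisfies \<open>(v M)\<^sub>l = 0\<close> for \<open>l < N\<close>, then the coordinates \<open>v S\<^sup>-\<^sup>1\<close> vanish
  below \<open>N\<close> and \<open>(v M)\<^sub>N = (v S\<^sup>-\<^sup>1)\<^sub>N H\<^sub>N\<close>.

  On hypergeometric moments the Euler operator is a shift, \<open>\<vartheta> M = \<Lambda> M\<close>, since
  \<open>\<vartheta> \<eta>\<^sup>k = k \<eta>\<^sup>k\<close>. Differentiating \<open>S M\<close> and applying the solve to the rows of
  \<open>\<vartheta> S + S \<Lambda>\<close> shows that \<open>(\<vartheta> S) S\<^sup>-\<^sup>1 + J\<close> agrees with \<open>(\<vartheta> H) H\<^sup>-\<^sup>1\<close> on and below the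
  diagonal; as \<open>\<vartheta> S\<close> is strictly lower triangular this gives \<open>\<alpha>\<close>, \<open>\<beta>\<close> and \<open>\<gamma>\<close> in terms
  of \<open>\<vartheta> S\<close>. The Hankel-type shift \<open>\<Lambda> M = M (\<Lambda>\<^sup>\<top>)\<^sup>2\<close> turns the rows of \<open>S \<Lambda>\<close> into
  rows of \<open>S M\<close> moved two columns, giving \<open>\<gamma> = H\<^sub>n\<^sub>+\<^sub>2 / H\<^sub>n\<close>; the remaining
  expressions in \<open>S\<^sup>[\<^sup>1\<^sup>]\<close>, \<open>S\<^sup>[\<^sup>2\<^sup>]\<close> come from expanding \<open>J\<close>. The entries of \<open>S\<close> are
  differentiable by Cramer's rule.
\<close>

section \<open>Triangular factorizations and the Jacobi matrix\<close>

declare ltinv.simps [simp del]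

lemma ltinv_upper: "n < m \<Longrightarrow> ltinv S n m = 0"
  by (simp add: ltinv.simps)

lemma ltinv_diag [simp]: "ltinv S n n = 1"
  by (simp add: ltinv.simps)

lemma ltinv_lower: "m < n \<Longrightarrow> ltinv S n m = - (\<Sum>k\<in>{m..<n}. S n k * ltinv S k m)"
  by (simp add: ltinv.simps)

locale lower_unitriangular =
  fixes S :: "nat \<Rightarrow> nat \<Rightarrow> real"
  assumes diag [simp]: "S n n = 1"
    and upper: "n < m \<Longrightarrow> S n m = 0"
begin

lemma mult_ltinv:
  assumes "n \<le> K"
  shows "(\<Sum>k\<le>K. S n k * ltinv S k m) = (if n = m then 1 else 0)"
proof (cases "m \<le> n")
  case True
  have "(\<Sum>k\<le>K. S n k * ltinv S k m) = (\<Sum>k\<in>{m..n}. S n k * ltinv S k m)"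
    using assms by (intro sum.mono_neutral_right) (auto simp: upper ltinv_upper)
  also have "\<dots> = ltinv S n m + (\<Sum>k\<in>{m..<n}. S n k * ltinv S k m)"
    using True by (simp add: atLeastLessThanSuc_atLeastAtMost[symmetric] sum.atLeastLessThan_Suc)
  also have "\<dots> = (if n = m then 1 else 0)"
    using True by (auto simp: ltinv_lower)
  finally show ?thesis .
next
  case False
  have "S n k * ltinv S k m = 0" for k
    using False by (cases "k < m") (simp_all add: ltinv_upper upper)
  then show ?thesis
    using False by (simp add: sum.neutral)
qed

lemma ltinv_mult:
  assumes "n \<le> K" "m \<le> K"
  shows "(\<Sum>k\<le>K. ltinv S n k * S k m) = (if n = m then 1 else 0)"
proof -
  define A where "A = mat (Suc K) (Suc K) (\<lambda>(i, j). S i j)"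
  define L where "L = mat (Suc K) (Suc K) (\<lambda>(i, j). ltinv S i j)"
  have "A * L = 1\<^sub>m (Suc K)"
    by (rule eq_matI)
      (auto simp: A_def L_def scalar_prod_def atLeast0LessThan lessThan_Suc_atMost mult_ltinv
        simp del: sum.op_ivl_Suc)
  then have "L * A = 1\<^sub>m (Suc K)"
    by (rule mat_mult_left_right_inverse[rotated 2]) (simp_all add: A_def L_def)
  then have "(L * A) $$ (n, m) = 1\<^sub>m (Suc K) $$ (n, m)"
    by simp
  then show ?thesis
    using assms
    by (simp add: A_def L_def scalar_prod_def atLeast0LessThan lessThan_Suc_atMost del: sum.op_ivl_Suc)
qed

lemma row_expansion:
  assumes "\<And>k. K < k \<Longrightarrow> v k = 0"
  shows "(\<Sum>j\<le>K. (\<Sum>k\<le>K. v k * ltinv S k j) * S j i) = v i"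
proof (cases "i \<le> K")
  case True
  have "(\<Sum>j\<le>K. (\<Sum>k\<le>K. v k * ltinv S k j) * S j i)
      = (\<Sum>k\<le>K. v k * (\<Sum>j\<le>K. ltinv S k j * S j i))"
    unfolding sum_distrib_left sum_distrib_right mult.assoc by (rule sum.swap)
  also have "\<dots> = v i"
    using True by (simp add: ltinv_mult if_distrib cong: if_cong)
  finally show ?thesis .
next
  case False
  then show ?thesis
    using assms by (simp add: upper)
qed

lemma ltinv_Suc: "ltinv S (Suc m) m = - S (Suc m) m"
  by (simp add: ltinv_lower)

lemma ltinv_Suc_Suc:
  "ltinv S (Suc (Suc m)) m = S (Suc (Suc m)) (Suc m) * S (Suc m) m - S (Suc (Suc m)) m"
  by (simp add: ltinv_lower[of m "Suc (Suc m)"] ltinv_Suc)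

end

(* aplus (S n) is the n-th row of S \<Lambda>. *)
lemma jacobi_eq: "jacobi S n m = (\<Sum>k\<le>Suc n. aplus (S n) k * ltinv S k m)"
proof -
  have "(\<Sum>k\<le>Suc n. aplus (S n) k * ltinv S k m)
      = (\<Sum>k\<in>{1..Suc n}. aplus (S n) k * ltinv S k m)"
    by (intro sum.mono_neutral_right) (auto simp: aplus_def)
  then show ?thesis
    by (simp add: jacobi_def aplus_def)
qed

lemma jacobi_eq_from_diag:
  "m \<le> Suc n \<Longrightarrow> jacobi S n m = (\<Sum>k\<in>{m..Suc n}. aplus (S n) k * ltinv S k m)"
  unfolding jacobi_eq by (intro sum.mono_neutral_right) (auto simp: ltinv_upper)

lemma aplus_moment:
  "(\<Sum>k\<le>Suc n. aplus r k * M k l) = (\<Sum>k\<le>n. r k * M (Suc k) l)"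
  by (subst sum.atMost_Suc_shift) (simp add: aplus_def)

context lower_unitriangular
begin

lemma alpha_coef_eq: "alpha_coef S n = aplus (subdiag 1 S) n - subdiag 1 S n"
  by (simp add: alpha_coef_def jacobi_eq_from_diag atLeastAtMostSuc_conv ltinv_Suc aplus_def
      subdiag_def)

lemma beta_coef_eq:
  "beta_coef S n = aplus (subdiag 2 S) n - subdiag 2 S n - subdiag 1 S n * alpha_coef S (n + 1)"
  by (simp add: beta_coef_def alpha_coef_eq jacobi_eq_from_diag atLeastAtMostSuc_conv ltinv_Suc
      ltinv_Suc_Suc aplus_def subdiag_def numeral_2_eq_2 algebra_simps)

end

(* SM_lower is the lower half of the factorization S M = H St\<^sup>-\<^sup>\<top>. *)
locale triangular_factorization = lower_unitriangular S for S +
  fixes M :: "nat \<Rightarrow> nat \<Rightarrow> real" and H :: "nat \<Rightarrow> real"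
  assumes SM_lower: "l \<le> n \<Longrightarrow> (\<Sum>k\<le>n. S n k * M k l) = (if l = n then H n else 0)"
    and leading_minor_nonzero: "leading_minor M (Suc n) \<noteq> 0"
begin

lemma det_transposed_block_nonzero: "det (mat (Suc n) (Suc n) (\<lambda>(i, j). M j i)) \<noteq> 0"
proof -
  let ?B = "mat (Suc n) (Suc n) (\<lambda>(i, j). M i j)"
  have "mat (Suc n) (Suc n) (\<lambda>(i, j). M j i) = transpose_mat ?B"
    by (rule eq_matI) auto
  then show ?thesis
    using leading_minor_nonzero[of n] det_transpose[of ?B "Suc n"] by (simp add: leading_minor_def)
qed

lemma SM_row_system: "l < n \<Longrightarrow> (\<Sum>k<n. M k l * S n k) = - M n l"
  using SM_lower[of l n] by (simp add: lessThan_Suc_atMost[symmetric] mult.commute)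

lemma H_nonzero: "H n \<noteq> 0"
proof
  assume "H n = 0"
  let ?v = "vec (Suc n) (S n)"
  have "mat (Suc n) (Suc n) (\<lambda>(i, j). M j i) *\<^sub>v ?v = 0\<^sub>v (Suc n)"
  proof (rule eq_vecI)
    fix l assume "l < dim_vec (0\<^sub>v (Suc n) :: real vec)"
    then show "(mat (Suc n) (Suc n) (\<lambda>(i, j). M j i) *\<^sub>v ?v) $ l = 0\<^sub>v (Suc n) $ l"
      using SM_lower[of l n] \<open>H n = 0\<close>
      by (simp add: scalar_prod_def atLeast0LessThan lessThan_Suc_atMost mult.commute
          del: sum.op_ivl_Suc)
  qed simp
  moreover have "?v \<noteq> 0\<^sub>v (Suc n)"
    by (metis diag index_vec index_zero_vec(1) lessI zero_neq_one)
  ultimately have "det (mat (Suc n) (Suc n) (\<lambda>(i, j). M j i)) = 0"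
    by (subst det_0_iff_vec_prod_zero[of _ "Suc n"]) (auto intro!: exI[where x = ?v])
  then show False
    using det_transposed_block_nonzero[of n] by simp
qed

lemma moment_row_expansion:
  assumes "\<And>k. K < k \<Longrightarrow> v k = 0"
  shows "(\<Sum>k\<le>K. v k * M k l)
    = (\<Sum>j\<le>l. (\<Sum>k\<le>K. v k * ltinv S k j) * (\<Sum>i\<le>j. S j i * M i l))"
proof -
  define c where "c j = (\<Sum>k\<le>K. v k * ltinv S k j)" for j
  have c_zero: "c j = 0" if "K < j" for j
    using that by (simp add: c_def ltinv_upper)
  have SM_zero: "(\<Sum>i\<le>j. S j i * M i l) = 0" if "l < j" for j
    using that SM_lower[of l j] by simp
  have "(\<Sum>k\<le>K. v k * M k l) = (\<Sum>k\<le>K. (\<Sum>j\<le>K. c j * S j k) * M k l)"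
    using row_expansion[OF assms] by (simp add: c_def)
  also have "\<dots> = (\<Sum>j\<le>K. c j * (\<Sum>i\<le>K. S j i * M i l))"
    unfolding sum_distrib_left sum_distrib_right mult.assoc by (rule sum.swap)
  also have "\<dots> = (\<Sum>j\<le>K. c j * (\<Sum>i\<le>j. S j i * M i l))"
    by (intro sum.cong refl arg_cong[where f = "(*) _"] sum.mono_neutral_right) (auto simp: upper)
  also have "\<dots> = (\<Sum>j\<le>max K l. c j * (\<Sum>i\<le>j. S j i * M i l))"
    by (intro sum.mono_neutral_left) (auto simp: c_zero)
  also have "\<dots> = (\<Sum>j\<le>l. c j * (\<Sum>i\<le>j. S j i * M i l))"
    by (intro sum.mono_neutral_right) (auto simp: SM_zero)
  finally show ?thesis
    by (simp add: c_def)
qed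

lemma coords_vanish_below:
  assumes supp: "\<And>k. K < k \<Longrightarrow> v k = 0"
    and orth: "\<And>l. l < N \<Longrightarrow> (\<Sum>k\<le>K. v k * M k l) = 0"
  shows "j < N \<Longrightarrow> (\<Sum>k\<le>K. v k * ltinv S k j) = 0"
proof (induction j rule: less_induct)
  case (less j)
  define c where "c i = (\<Sum>k\<le>K. v k * ltinv S k i)" for i
  have "0 = (\<Sum>i\<le>j. c i * (\<Sum>k\<le>i. S i k * M k j))"
    using orth[OF less.prems] moment_row_expansion[OF supp] by (simp add: c_def)
  also have "\<dots> = c j * H j + (\<Sum>i<j. c i * (\<Sum>k\<le>i. S i k * M k j))"
    using SM_lower[of j j] by (simp add: lessThan_Suc_atMost[symmetric])
  also have "\<dots> = c j * H j"
    using less by (simp add: c_def)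
  finally show ?case
    using H_nonzero by (simp add: c_def)
qed

lemma moment_eq_coord_mult_H:
  assumes supp: "\<And>k. K < k \<Longrightarrow> v k = 0"
    and orth: "\<And>l. l < N \<Longrightarrow> (\<Sum>k\<le>K. v k * M k l) = 0"
  shows "(\<Sum>k\<le>K. v k * M k N) = (\<Sum>k\<le>K. v k * ltinv S k N) * H N"
proof -
  define c where "c i = (\<Sum>k\<le>K. v k * ltinv S k i)" for i
  have "(\<Sum>k\<le>K. v k * M k N) = (\<Sum>i\<le>N. c i * (\<Sum>k\<le>i. S i k * M k N))"
    using moment_row_expansion[OF supp] by (simp add: c_def)
  also have "\<dots> = c N * H N + (\<Sum>i<N. c i * (\<Sum>k\<le>i. S i k * M k N))"
    using SM_lower[of N N] by (simp add: lessThan_Suc_atMost[symmetric])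
  also have "\<dots> = c N * H N"
    using coords_vanish_below[OF supp orth] by (simp add: c_def)
  finally show ?thesis
    by (simp add: c_def)
qed

lemma gamma_coef_eq_H_ratio:
  assumes shift: "\<And>k l. M (Suc k) l = M k (l + 2)"
  shows "gamma_coef S n = H (n + 2) / H n"
proof -
  define v where "v = aplus (S (n + 2))"
  have supp: "v k = 0" if "n + 3 < k" for k
    using that by (simp add: v_def aplus_def upper)
  have moments: "(\<Sum>k\<le>n + 3. v k * M k l) = (\<Sum>k\<le>n + 2. S (n + 2) k * M k (l + 2))" for l
    using aplus_moment[where n = "n + 2" and r = "S (n + 2)" and M = M and l = l]
    by (simp add: v_def shift numeral_eq_Suc)
  have orth: "(\<Sum>k\<le>n + 3. v k * M k l) = 0" if "l < n" for l
    using that SM_lower[of "l + 2" "n + 2"] by (simp add: moments)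
  have "H (n + 2) = (\<Sum>k\<le>n + 3. v k * M k n)"
    using SM_lower[of "n + 2" "n + 2"] by (simp add: moments)
  also have "\<dots> = gamma_coef S n * H n"
    using moment_eq_coord_mult_H[OF supp orth]
    by (simp add: v_def gamma_coef_def jacobi_eq numeral_eq_Suc)
  finally show ?thesis
    using H_nonzero[of n] by simp
qed

(* TS and TH stand for \<vartheta> S and \<vartheta> H; derivative_SM is \<vartheta> (S M) = (\<vartheta> S) M + S (\<Lambda> M). *)
context
  fixes TS :: "nat \<Rightarrow> nat \<Rightarrow> real" and TH :: "nat \<Rightarrow> real"
  assumes TS_upper: "\<And>n k. n \<le> k \<Longrightarrow> TS n k = 0"
    and derivative_SM: "\<And>n l. l \<le> n \<Longrightarrow>
      (\<Sum>k\<le>n. TS n k * M k l) + (\<Sum>k\<le>n. S n k * M (Suc k) l) = (if l = n then TH n else 0)"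
begin

lemma derivative_row_moments:
  "l \<le> n \<Longrightarrow> (\<Sum>k\<le>Suc n. (TS n k + aplus (S n) k) * M k l) = (if l = n then TH n else 0)"
  unfolding distrib_right sum.distrib aplus_moment
  using derivative_SM[of l n] by (simp add: TS_upper)

lemma derivative_row_coords:
  assumes "j \<le> n"
  shows "(\<Sum>k<n. TS n k * ltinv S k j) + jacobi S n j = (if j = n then TH n / H n else 0)"
proof -
  define v where "v k = TS n k + aplus (S n) k" for k
  have supp: "v k = 0" if "Suc n < k" for k
    using that by (simp add: v_def aplus_def upper TS_upper)
  have orth: "(\<Sum>k\<le>Suc n. v k * M k l) = 0" if "l < n" for l
    using that derivative_row_moments[of l n] by (simp add: v_def)
  have "(\<Sum>k\<le>Suc n. v k * ltinv S k j) = (\<Sum>k<n. TS n k * ltinv S k j) + jacobi S n j"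
    by (simp add: v_def distrib_right sum.distrib jacobi_eq TS_upper
        lessThan_Suc_atMost[symmetric])
  moreover have "(\<Sum>k\<le>Suc n. v k * ltinv S k j) = (if j = n then TH n / H n else 0)"
  proof (cases "j = n")
    case True
    then show ?thesis
      using moment_eq_coord_mult_H[OF supp orth] derivative_row_moments[of n n] H_nonzero[of n]
      by (simp add: v_def field_simps)
  next
    case False
    then show ?thesis
      using coords_vanish_below[OF supp orth] assms by simp
  qed
  ultimately show ?thesis
    by simp
qed

lemma alpha_coef_eq_theta: "alpha_coef S n = TH n / H n"
  using derivative_row_coords[of n n] by (simp add: alpha_coef_def ltinv_upper)

lemma beta_coef_eq_theta: "beta_coef S n = - TS (n + 1) n"
  using derivative_row_coords[of n "n + 1"] by (simp add: beta_coef_def ltinv_upper)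

lemma gamma_coef_eq_theta: "gamma_coef S n = - TS (n + 2) n + TS (n + 2) (n + 1) * S (n + 1) n"
  using derivative_row_coords[of n "n + 2"]
  by (simp add: gamma_coef_def ltinv_upper ltinv_Suc numeral_eq_Suc)

end

end

lemma unitriangular_system_delta:
  fixes p :: "nat \<Rightarrow> real" and T :: "nat \<Rightarrow> nat \<Rightarrow> real"
  assumes diag: "\<And>m. T m m = 1"
    and system: "\<And>m. m \<le> n \<Longrightarrow> (\<Sum>l\<le>m. p l * T m l) = (if m = n then h else 0)"
  shows "m \<le> n \<Longrightarrow> p m = (if m = n then h else 0)"
proof (induction m rule: less_induct)
  case (less m)
  have "(\<Sum>l\<le>m. p l * T m l) = p m + (\<Sum>l<m. p l * T m l)"
    using diag by (simp add: lessThan_Suc_atMost[symmetric])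
  also have "(\<Sum>l<m. p l * T m l) = 0"
    using less by simp
  finally show ?case
    using system[OF less.prems] by simp
qed

lemma triangular_factorizationI:
  assumes "lower_unitriangular S" and St_diag: "\<And>m. St m m = 1"
    and gauss_borel: "\<And>n m. (\<Sum>k\<le>n. \<Sum>l\<le>m. S n k * M k l * St m l)
                              = (if n = m then H n else 0)"
    and "\<And>n. leading_minor M (Suc n) \<noteq> 0"
  shows "triangular_factorization S M H"
proof -
  have "(\<Sum>l\<le>m. (\<Sum>k\<le>n. S n k * M k l) * St m l) = (if m = n then H n else 0)" for n m
    using gauss_borel[of n m] by (auto simp: sum_distrib_right intro: trans[OF sum.swap])
  then have "l \<le> n \<Longrightarrow> (\<Sum>k\<le>n. S n k * M k l) = (if l = n then H n else 0)" for n l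
    by (rule unitriangular_system_delta[OF St_diag])
  with assms show ?thesis
    by (simp add: triangular_factorization_def triangular_factorization_axioms_def)
qed

section \<open>Partial derivatives and the Euler operator\<close>

definition partially_differentiable :: "(real \<times> real \<Rightarrow> real) \<Rightarrow> real \<times> real \<Rightarrow> bool" where
  "partially_differentiable f e \<longleftrightarrow>
     (\<lambda>t. f (t, snd e)) field_differentiable at (fst e) \<and>
     (\<lambda>t. f (fst e, t)) field_differentiable at (snd e)"

lemma eventually_nhds_Pair_fst:
  assumes "eventually P (nhds e)"
  shows "eventually (\<lambda>t. P (t, snd e)) (nhds (fst e))"
proof (rule eventually_compose_filterlim[OF assms])
  show "((\<lambda>t. (t, snd e)) \<longlongrightarrow> e) (nhds (fst e))"
    by (cases e) (auto intro!: tendsto_intros filterlim_ident)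
qed

lemma eventually_nhds_Pair_snd:
  assumes "eventually P (nhds e)"
  shows "eventually (\<lambda>t. P (fst e, t)) (nhds (snd e))"
proof (rule eventually_compose_filterlim[OF assms])
  show "((\<lambda>t. (fst e, t)) \<longlongrightarrow> e) (nhds (snd e))"
    by (cases e) (auto intro!: tendsto_intros filterlim_ident)
qed

lemma partially_differentiable_cong:
  assumes "eventually (\<lambda>x. f x = g x) (nhds e)"
  shows "partially_differentiable f e \<longleftrightarrow> partially_differentiable g e"
proof -
  have "(\<lambda>t. f (t, snd e)) field_differentiable at (fst e)
          \<longleftrightarrow> (\<lambda>t. g (t, snd e)) field_differentiable at (fst e)"
    "(\<lambda>t. f (fst e, t)) field_differentiable at (snd e)
          \<longleftrightarrow> (\<lambda>t. g (fst e, t)) field_differentiable at (snd e)"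
    unfolding field_differentiable_def
    using DERIV_cong_ev[OF refl eventually_nhds_Pair_fst[OF assms(1)] refl]
      DERIV_cong_ev[OF refl eventually_nhds_Pair_snd[OF assms(1)] refl] by auto
  then show ?thesis
    by (simp add: partially_differentiable_def)
qed

lemma partially_differentiable_const [simp]: "partially_differentiable (\<lambda>x. c) e"
  by (simp add: partially_differentiable_def)

lemma partially_differentiable_minus:
  "partially_differentiable f e \<Longrightarrow> partially_differentiable (\<lambda>x. - f x) e"
  by (simp add: partially_differentiable_def field_differentiable_minus)

lemma partially_differentiable_mult:
  "partially_differentiable f e \<Longrightarrow> partially_differentiable g e \<Longrightarrow>
    partially_differentiable (\<lambda>x. f x * g x) e"
  by (simp add: partially_differentiable_def field_differentiable_mult)

lemma partially_differentiable_divide: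
  "partially_differentiable f e \<Longrightarrow> partially_differentiable g e \<Longrightarrow> g e \<noteq> 0 \<Longrightarrow>
    partially_differentiable (\<lambda>x. f x / g x) e"
  by (cases e) (simp add: partially_differentiable_def field_differentiable_divide)

lemma partially_differentiable_sum:
  "(\<And>i. i \<in> I \<Longrightarrow> partially_differentiable (f i) e) \<Longrightarrow>
    partially_differentiable (\<lambda>x. \<Sum>i\<in>I. f i x) e"
  by (simp add: partially_differentiable_def field_differentiable_sum)

lemma partially_differentiable_prod:
  "(\<And>i. i \<in> I \<Longrightarrow> partially_differentiable (f i) e) \<Longrightarrow>
    partially_differentiable (\<lambda>x. \<Prod>i\<in>I. f i x) e"
  by (induction I rule: infinite_finite_induct) (auto intro: partially_differentiable_mult)

lemma partially_differentiable_det: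
  assumes "\<And>i j. i < n \<Longrightarrow> j < n \<Longrightarrow> partially_differentiable (\<lambda>x. A x i j) e"
  shows "partially_differentiable (\<lambda>x. det (mat n n (\<lambda>(i, j). A x i j))) e"
proof -
  have "det (mat n n (\<lambda>(i, j). A x i j))
      = (\<Sum>p\<in>{p. p permutes {0..<n}}. signof p * (\<Prod>i=0..<n. A x i (p i)))" for x
    by (subst det_def'[of _ n]) (auto intro!: sum.cong arg_cong2[where f = "(*)"] prod.cong
        simp: permutes_in_image)
  moreover have "partially_differentiable
      (\<lambda>x. \<Sum>p\<in>{p. p permutes {0..<n}}. signof p * (\<Prod>i=0..<n. A x i (p i))) e"
    by (intro partially_differentiable_sum partially_differentiable_mult
        partially_differentiable_const partially_differentiable_prod assms)
      (auto simp: permutes_in_image)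
  ultimately show ?thesis
    by simp
qed

lemma theta_cong:
  assumes "eventually (\<lambda>x. f x = g x) (nhds e)"
  shows "theta f e = theta g e"
  unfolding theta_def
  using deriv_cong_ev[OF eventually_nhds_Pair_fst[OF assms] refl]
    deriv_cong_ev[OF eventually_nhds_Pair_snd[OF assms] refl] by simp

lemma theta_const [simp]: "theta (\<lambda>x. c) e = 0"
  by (simp add: theta_def)

lemma theta_sum_mult:
  assumes "\<And>k. partially_differentiable (f k) e" and "\<And>k. partially_differentiable (g k) e"
  shows "theta (\<lambda>x. \<Sum>k\<in>A. f k x * g k x) e
    = (\<Sum>k\<in>A. theta (f k) e * g k e + f k e * theta (g k) e)"
  using assms
  by (simp add: theta_def partially_differentiable_def field_differentiable_mult sum_distrib_left
      sum.distrib algebra_simps)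

lemma power_series_euler_derivative:
  fixes a :: "nat \<Rightarrow> real"
  assumes "eventually (\<lambda>t. summable (\<lambda>k. a k * t ^ k)) (nhds t0)"
  shows "(\<lambda>t. \<Sum>k. a k * t ^ k) field_differentiable at t0"
    and "t0 * deriv (\<lambda>t. \<Sum>k. a k * t ^ k) t0 = (\<Sum>k. real k * a k * t0 ^ k)"
proof -
  obtain d where "d > 0" and d: "\<And>t. dist t t0 < d \<Longrightarrow> summable (\<lambda>k. a k * t ^ k)"
    using assms by (auto simp: eventually_nhds_metric)
  define K where "K = t0 + (if t0 \<ge> 0 then d / 2 else - d / 2)"
  have K: "summable (\<lambda>k. a k * K ^ k)" "norm t0 < norm K"
    using \<open>d > 0\<close> by (auto simp: K_def dist_real_def intro!: d)
  define D where "D = (\<Sum>k. diffs a k * t0 ^ k)"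
  have DERIV: "DERIV (\<lambda>t. \<Sum>k. a k * t ^ k) t0 :> D"
    unfolding D_def by (rule termdiffs_strong[OF K])
  then show "(\<lambda>t. \<Sum>k. a k * t ^ k) field_differentiable at t0"
    by (auto simp: field_differentiable_def)
  have "summable (\<lambda>k. diffs a k * t0 ^ k)"
    using K by (intro termdiff_converges[of t0 "norm K"]) (auto intro: powser_inside)
  then have "(\<lambda>k. t0 * (real k * a k * t0 ^ (k - 1))) sums (t0 * D)"
    unfolding D_def by (intro sums_mult) (use diffs_equiv[of a t0] in simp)
  moreover have "(\<lambda>k. t0 * (real k * a k * t0 ^ (k - 1))) = (\<lambda>k. real k * a k * t0 ^ k)"
  proof
    show "t0 * (real k * a k * t0 ^ (k - 1)) = real k * a k * t0 ^ k" for k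
      by (cases k) auto
  qed
  ultimately have "(\<lambda>k. real k * a k * t0 ^ k) sums (t0 * D)"
    by (simp only:)
  then show "t0 * deriv (\<lambda>t. \<Sum>k. a k * t ^ k) t0 = (\<Sum>k. real k * a k * t0 ^ k)"
    using DERIV_imp_deriv[OF DERIV] by (simp add: sums_iff)
qed

lemma hgw_series_euler_derivative:
  assumes "eventually (\<lambda>t. summable (\<lambda>k. real k ^ p * hgw bs cs t k)) (nhds t0)"
  shows "(\<lambda>t. \<Sum>k. real k ^ p * hgw bs cs t k) field_differentiable at t0"
    and "t0 * deriv (\<lambda>t. \<Sum>k. real k ^ p * hgw bs cs t k) t0
      = (\<Sum>k. real k ^ Suc p * hgw bs cs t0 k)"
proof -
  define a where "a k = real k ^ p * hgw bs cs 1 k" for k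
  have coeff: "real k ^ p * hgw bs cs t k = a k * t ^ k"
    "real k ^ Suc p * hgw bs cs t k = real k * a k * t ^ k" for k t
    by (simp_all add: a_def hgw_def)
  note euler = power_series_euler_derivative[of a t0, OF assms[unfolded coeff]]
  show "(\<lambda>t. \<Sum>k. real k ^ p * hgw bs cs t k) field_differentiable at t0"
    unfolding coeff by (rule euler(1))
  show "t0 * deriv (\<lambda>t. \<Sum>k. real k ^ p * hgw bs cs t k) t0
      = (\<Sum>k. real k ^ Suc p * hgw bs cs t0 k)"
    unfolding coeff by (rule euler(2))
qed

lemma moment_partial_derivatives:
  assumes conv: "\<forall>\<^sub>F x in nhds e. \<forall>p. summable (\<lambda>k. real k ^ p * hgw b1 cs (fst x) k)
                                     \<and> summable (\<lambda>k. real k ^ p * hgw b2 cs (snd x) k)"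
  shows "partially_differentiable (\<lambda>x. moment b1 b2 cs x k l) e"
    and "theta (\<lambda>x. moment b1 b2 cs x k l) e = moment b1 b2 cs e (Suc k) l"
proof -
  define p where "p = k + l div 2"
  have "eventually (\<lambda>t. summable (\<lambda>k. real k ^ p * hgw b1 cs t k)) (nhds (fst e))"
    using eventually_nhds_Pair_fst[OF conv] by (rule eventually_mono) simp
  note E1 = hgw_series_euler_derivative[OF this]
  have "eventually (\<lambda>t. summable (\<lambda>k. real k ^ p * hgw b2 cs t k)) (nhds (snd e))"
    using eventually_nhds_Pair_snd[OF conv] by (rule eventually_mono) simp
  note E2 = hgw_series_euler_derivative[OF this]
  show "partially_differentiable (\<lambda>x. moment b1 b2 cs x k l) e"
    using E1(1) E2(1) by (cases "even l") (simp_all add: partially_differentiable_def moment_def p_def)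
  show "theta (\<lambda>x. moment b1 b2 cs x k l) e = moment b1 b2 cs e (Suc k) l"
    using E1(2) E2(2) by (cases "even l") (simp_all add: theta_def moment_def p_def)
qed

lemma cramer_entry:
  fixes A :: "nat \<Rightarrow> nat \<Rightarrow> 'a :: comm_ring_1"
  assumes "\<And>i. i < n \<Longrightarrow> (\<Sum>j<n. A i j * s j) = r i" and "k < n"
  shows "s k * det (mat n n (\<lambda>(i, j). A i j)) = det (mat n n (\<lambda>(i, j). if j = k then r i else A i j))"
proof -
  let ?A = "mat n n (\<lambda>(i, j). A i j)"
  have "?A *\<^sub>v vec n s = vec n r"
    using assms(1) by (intro eq_vecI) (auto simp: scalar_prod_def atLeast0LessThan)
  moreover have "replace_col ?A (vec n r) k = mat n n (\<lambda>(i, j). if j = k then r i else A i j)"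
    by (rule eq_matI) (auto simp: replace_col_def)
  ultimately show ?thesis
    using cramer_lemma_mat[of ?A n "vec n s" k] assms(2) by simp
qed

lemma partially_differentiable_cramer:
  fixes A :: "real \<times> real \<Rightarrow> nat \<Rightarrow> nat \<Rightarrow> real" and r s :: "real \<times> real \<Rightarrow> nat \<Rightarrow> real"
  assumes system: "\<forall>\<^sub>F x in nhds e. det (mat n n (\<lambda>(i, j). A x i j)) \<noteq> 0
                        \<and> (\<forall>i<n. (\<Sum>j<n. A x i j * s x j) = r x i)"
    and A: "\<And>i j. partially_differentiable (\<lambda>x. A x i j) e"
    and r: "\<And>i. partially_differentiable (\<lambda>x. r x i) e"
    and "k < n"
  shows "partially_differentiable (\<lambda>x. s x k) e"
proof (rule partially_differentiable_cong[THEN iffD1])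
  let ?det = "\<lambda>x. det (mat n n (\<lambda>(i, j). A x i j))"
  let ?det_k = "\<lambda>x. det (mat n n (\<lambda>(i, j). if j = k then r x i else A x i j))"
  show "\<forall>\<^sub>F x in nhds e. ?det_k x / ?det x = s x k"
    using system
  proof (rule eventually_mono)
    fix x
    assume "?det x \<noteq> 0 \<and> (\<forall>i<n. (\<Sum>j<n. A x i j * s x j) = r x i)"
    moreover from this have "s x k * ?det x = ?det_k x"
      using cramer_entry[of n "A x" "s x" "r x" k] \<open>k < n\<close> by blast
    ultimately show "?det_k x / ?det x = s x k"
      by (simp add: field_simps)
  qed
  have entries: "partially_differentiable (\<lambda>x. if j = k then r x i else A x i j) e" for i j
    by (cases "j = k") (simp_all add: A r)
  show "partially_differentiable (\<lambda>x. ?det_k x / ?det x) e"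
    using eventually_nhds_x_imp_x[OF system]
    by (intro partially_differentiable_divide partially_differentiable_det A entries) auto
qed

context
  fixes S M :: "real \<times> real \<Rightarrow> nat \<Rightarrow> nat \<Rightarrow> real" and H :: "real \<times> real \<Rightarrow> nat \<Rightarrow> real"
    and e :: "real \<times> real"
  assumes factorization: "\<forall>\<^sub>F x in nhds e. triangular_factorization (S x) (M x) (H x)"
    and M_partially_differentiable: "\<And>k l. partially_differentiable (\<lambda>x. M x k l) e"
begin

lemma eventually_S_upper: "n \<le> k \<Longrightarrow> \<forall>\<^sub>F x in nhds e. S x n k = (if n = k then 1 else 0)"
  using factorization
  by (rule eventually_mono) (auto simp: triangular_factorization_def lower_unitriangular_def)

lemma partially_differentiable_S: "partially_differentiable (\<lambda>x. S x n k) e"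
proof (cases "k < n")
  case True
  show ?thesis
  proof (rule partially_differentiable_cramer[where A = "\<lambda>x i j. M x j i"
        and r = "\<lambda>x i. - M x n i"])
    show "\<forall>\<^sub>F x in nhds e. det (mat n n (\<lambda>(i, j). M x j i)) \<noteq> 0
                          \<and> (\<forall>i<n. (\<Sum>j<n. M x j i * S x n j) = - M x n i)"
      using factorization
    proof (rule eventually_mono)
      fix x
      assume "triangular_factorization (S x) (M x) (H x)"
      then interpret triangular_factorization "S x" "M x" "H x" .
      show "det (mat n n (\<lambda>(i, j). M x j i)) \<noteq> 0
          \<and> (\<forall>i<n. (\<Sum>j<n. M x j i * S x n j) = - M x n i)"
        using det_transposed_block_nonzero[of "n - 1"] True SM_row_system by simp
    qed
  qed (use True M_partially_differentiable partially_differentiable_minus in auto)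
next
  case False
  then show ?thesis
    using partially_differentiable_cong[OF eventually_S_upper[of n k]] by simp
qed

lemma theta_S_upper: "n \<le> k \<Longrightarrow> theta (\<lambda>x. S x n k) e = 0"
  using theta_cong[OF eventually_S_upper] by simp

lemma theta_SM_lower:
  assumes "l \<le> n"
  shows "(\<Sum>k\<le>n. theta (\<lambda>x. S x n k) e * M e k l) + (\<Sum>k\<le>n. S e n k * theta (\<lambda>x. M x k l) e)
    = (if l = n then theta (\<lambda>x. H x n) e else 0)"
proof -
  have "\<forall>\<^sub>F x in nhds e. (\<Sum>k\<le>n. S x n k * M x k l) = (if l = n then H x n else 0)"
    using factorization
    by (rule eventually_mono) (use assms triangular_factorization.SM_lower in blast)
  then have "theta (\<lambda>x. \<Sum>k\<le>n. S x n k * M x k l) e = theta (\<lambda>x. if l = n then H x n else 0) e"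
    by (rule theta_cong)
  moreover have "theta (\<lambda>x. \<Sum>k\<le>n. S x n k * M x k l) e
      = (\<Sum>k\<le>n. theta (\<lambda>x. S x n k) e * M e k l + S e n k * theta (\<lambda>x. M x k l) e)"
    by (rule theta_sum_mult) (use partially_differentiable_S M_partially_differentiable in auto)
  ultimately show ?thesis
    by (cases "l = n") (simp_all add: sum.distrib)
qed

end

theorem mainTheorem17:
  fixes b1 b2 cs :: "real list"
    and U :: "(real \<times> real) set"
    and S St :: "real \<times> real \<Rightarrow> nat \<Rightarrow> nat \<Rightarrow> real"
    and H :: "real \<times> real \<Rightarrow> nat \<Rightarrow> real"
  assumes U_open: "open U"
    and c_ok: "\<And>c. c \<in> set cs \<Longrightarrow> c \<notin> {x. \<exists>k::nat. x = - real k}"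
    and conv1: "\<And>e p. e \<in> U \<Longrightarrow> summable (\<lambda>k. real k ^ p * hgw b1 cs (fst e) k)"
    and conv2: "\<And>e p. e \<in> U \<Longrightarrow> summable (\<lambda>k. real k ^ p * hgw b2 cs (snd e) k)"
    and minors: "\<And>e n. e \<in> U \<Longrightarrow> n \<ge> 1 \<Longrightarrow> leading_minor (moment b1 b2 cs e) n \<noteq> 0"
    and S_unit: "\<And>e n. e \<in> U \<Longrightarrow> S e n n = 1"
    and S_lower: "\<And>e n m. e \<in> U \<Longrightarrow> n < m \<Longrightarrow> S e n m = 0"
    and St_unit: "\<And>e n. e \<in> U \<Longrightarrow> St e n n = 1"
    and St_lower: "\<And>e n m. e \<in> U \<Longrightarrow> n < m \<Longrightarrow> St e n m = 0"
    and gauss_borel: "\<And>e n m. e \<in> U \<Longrightarrow>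
        (\<Sum>k\<le>n. \<Sum>l\<le>m. S e n k * moment b1 b2 cs e k l * St e m l)
          = (if n = m then H e n else 0)"
    and e_in: "e \<in> U"
  shows
    "alpha_coef (S e) n = theta (\<lambda>x. H x n) e / H e n
     \<and> theta (\<lambda>x. H x n) e / H e n = aplus (subdiag 1 (S e)) n - subdiag 1 (S e) n
     \<and> beta_coef (S e) n = - theta (\<lambda>x. subdiag 1 (S x) n) e
     \<and> - theta (\<lambda>x. subdiag 1 (S x) n) e
         = aplus (subdiag 2 (S e)) n - subdiag 2 (S e) n
           - subdiag 1 (S e) n * aminus (\<lambda>i. theta (\<lambda>x. H x i) e / H e i) n
     \<and> gamma_coef (S e) n
         = - theta (\<lambda>x. subdiag 2 (S x) n) e
           + theta (\<lambda>x. aminus (subdiag 1 (S x)) n) e * subdiag 1 (S e) n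
     \<and> - theta (\<lambda>x. subdiag 2 (S x) n) e
           + theta (\<lambda>x. aminus (subdiag 1 (S x)) n) e * subdiag 1 (S e) n
         = H e (n + 2) / H e n"
proof -
  have factorization: "triangular_factorization (S x) (moment b1 b2 cs x) (H x)" if "x \<in> U" for x
    using that S_unit S_lower St_unit gauss_borel minors
    by (intro triangular_factorizationI[where St = "St x"]) (auto simp: lower_unitriangular_def)
  have near_e: "\<forall>\<^sub>F x in nhds e. x \<in> U"
    using U_open e_in by (rule eventually_nhds_in_open)
  have factorization_near_e:
    "\<forall>\<^sub>F x in nhds e. triangular_factorization (S x) (moment b1 b2 cs x) (H x)"
    using near_e by (rule eventually_mono) (rule factorization)
  have "\<forall>\<^sub>F x in nhds e. \<forall>p. summable (\<lambda>k. real k ^ p * hgw b1 cs (fst x) k)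
                            \<and> summable (\<lambda>k. real k ^ p * hgw b2 cs (snd x) k)"
    using near_e by (rule eventually_mono) (simp add: conv1 conv2)
  note moment_derivatives = moment_partial_derivatives[OF this]
  note TS_upper = theta_S_upper[OF factorization_near_e moment_derivatives(1)]
  note derivative_SM = theta_SM_lower[OF factorization_near_e moment_derivatives(1),
      unfolded moment_derivatives(2)]
  interpret triangular_factorization "S e" "moment b1 b2 cs e" "H e"
    using factorization[OF e_in] .
  have "moment b1 b2 cs e (Suc k) l = moment b1 b2 cs e k (l + 2)" for k l
    by (simp add: moment_def)
  then show ?thesis
    using alpha_coef_eq_theta[OF TS_upper derivative_SM, of n]
      alpha_coef_eq_theta[OF TS_upper derivative_SM, of "n + 1"]
      beta_coef_eq_theta[OF TS_upper derivative_SM, of n]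
      gamma_coef_eq_theta[OF TS_upper derivative_SM, of n]
      alpha_coef_eq[of n] beta_coef_eq[of n] gamma_coef_eq_H_ratio
    by (simp add: subdiag_def aminus_def)
qed

end
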